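(* Let $k\geq 2$ and $\ell\geq 3$ be fixed integers. Let $p\geq\frac{\log n}{\sqrt n}$ and $G\in\mathcal{G}_{k,n,p}$, and let $X=X_0,X_1,\dots$ be a simple random walk on $G$ starting at $w\in V(G)$. Then for all $x\in V(G)$, \[ \mathbb{P}_w[X_2=x]=\begin{cases}\frac1n\pm\mathcal{O}\!\left(\frac{\sqrt{\log n}}{pn^{3/2}}\right)&\text{if }x\neq w,\\[2pt] \frac{1}{pn}\pm\mathcal{O}\!\left(\frac{\sqrt{\log n}}{p^{3/2}n^{3/2}}\right)&\text{if }x=w,\end{cases} \] and \[ \mathbb{P}_w[X_\ell=x]=\frac1n\pm\mathcal{O}\!\left(\frac{\sqrt{\log n}}{pn^{3/2}}\right). \]
   Context: For $p=p(n)$ with $\frac{\log n}{n^{(k-1)/k}}\le p\le 1-\Omega(\frac{\log^4 n}{n})$, $\mathcal{G}_{k,n,p}$ denotes the set of graphs $G$ on $n$ vertices satisfying: (i) $G$ is not bipartite; (ii) $\operatorname{diam}(G)\le k$; (iii) every vertex has degree $d(v)=pn\pm\mathcal{O}(\sqrt{pn\log n})$; (iv) $2|E(G)|=pn^2\pm\mathcal{O}(\sqrt{pn^2\log n})$; (v) $|N(v)\cap N(w)|=p^2n\pm\mathcal{O}(\max\{\sqrt{p^2n\log n},\log n\})$ for all $v\ne w$; (vi) the unit eigenvector $\phi$ of the largest adjacency eigenvalue has entries $\phi_i=\frac1{\sqrt n}\pm\mathcal{O}(\frac{\log^{3/2}n}{\sqrt p\,n\log(pn)})$; (vii) $\lambda_1=(1+o(1))pn$;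 (viii) $\max\{|\lambda_2|,|\lambda_n|\}=\mathcal{O}(\sqrt{pn})$, where $\lambda_1\ge\dots\ge\lambda_n$ are the adjacency eigenvalues. Asymptotic notation is as $n\to\infty$ with constants independent of $n$. $\mathbb{P}_w[\cdot]=\mathbb{P}[\cdot\mid X_0=w]$. *)

theory Defs
  imports Complex_Main "Jordan_Normal_Form.Char_Poly"
begin

definition simple_graph :: "nat \<Rightarrow> (nat \<Rightarrow> nat \<Rightarrow> bool) \<Rightarrow> bool" where
  "simple_graph n E \<longleftrightarrow> (\<forall>u v. E u v \<longrightarrow> u < n \<and> v < n \<and> u \<noteq> v \<and> E v u)"

definition bipartite :: "nat \<Rightarrow> (nat \<Rightarrow> nat \<Rightarrow> bool) \<Rightarrow> bool" where
  "bipartite n E \<longleftrightarrow> (\<exists>S. \<forall>u<n. \<forall>v<n. E u v \<longrightarrow> (u \<in> S \<longleftrightarrow> v \<notin> S))"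

text \<open>A walk of length t = length xs - 1 from u to v.\<close>
definition is_walk :: "nat \<Rightarrow> (nat \<Rightarrow> nat \<Rightarrow> bool) \<Rightarrow> nat list \<Rightarrow> bool" where
  "is_walk n E xs \<longleftrightarrow> xs \<noteq> [] \<and> set xs \<subseteq> {..<n} \<and>
     (\<forall>i. Suc i < length xs \<longrightarrow> E (xs ! i) (xs ! Suc i))"

definition diam_le :: "nat \<Rightarrow> (nat \<Rightarrow> nat \<Rightarrow> bool) \<Rightarrow> nat \<Rightarrow> bool" where
  "diam_le n E k \<longleftrightarrow> (\<forall>u<n. \<forall>v<n. \<exists>xs. is_walk n E xs \<and> hd xs = u \<and> last xs = v
      \<and> length xs \<le> Suc k)"

definition degree :: "nat \<Rightarrow> (nat \<Rightarrow> nat \<Rightarrow> bool) \<Rightarrow> nat \<Rightarrow> nat" where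
  "degree n E v = card {u. u < n \<and> E v u}"

definition codegree :: "nat \<Rightarrow> (nat \<Rightarrow> nat \<Rightarrow> bool) \<Rightarrow> nat \<Rightarrow> nat \<Rightarrow> nat" where
  "codegree n E v w = card {u. u < n \<and> E v u \<and> E w u}"

text \<open>2|E(G)| = number of ordered adjacent pairs.\<close>
definition num_edges :: "nat \<Rightarrow> (nat \<Rightarrow> nat \<Rightarrow> bool) \<Rightarrow> nat" where
  "num_edges n E = card {(u, v). u < n \<and> v < n \<and> E u v} div 2"

definition adj_mat :: "nat \<Rightarrow> (nat \<Rightarrow> nat \<Rightarrow> bool) \<Rightarrow> real mat" where
  "adj_mat n E = mat n n (\<lambda>(i, j). if E i j then 1 else 0)"

text \<open>lam is the list of adjacency eigenvalues lambda_1 >= ... >= lambda_n,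
  counted with multiplicity (i.e. the roots of the characteristic polynomial).\<close>
definition adj_eigenvalues :: "nat \<Rightarrow> (nat \<Rightarrow> nat \<Rightarrow> bool) \<Rightarrow> real list \<Rightarrow> bool" where
  "adj_eigenvalues n E lam \<longleftrightarrow> length lam = n \<and> sorted (rev lam) \<and>
     char_poly (adj_mat n E) = (\<Prod>a\<leftarrow>lam. [:- a, 1:])"

text \<open>Distribution of a simple random walk: walk_prob n E w t x = P_w[X_t = x].\<close>
fun walk_prob :: "nat \<Rightarrow> (nat \<Rightarrow> nat \<Rightarrow> bool) \<Rightarrow> nat \<Rightarrow> nat \<Rightarrow> nat \<Rightarrow> real" where
  "walk_prob n E w 0 x = (if x = w then 1 else 0)"
| "walk_prob n E w (Suc t) x =
     (\<Sum>y<n. walk_prob n E w t y * (if E y x then 1 / real (degree n E y) else 0))"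

text \<open>The implicit constants are made explicit:
  C bounds all the O(.)-constants, c > 0 is the Omega-constant in the upper bound on p,
  and eps is the o(1)-function in (vii) (eps tends to 0).\<close>
definition in_G :: "real \<Rightarrow> real \<Rightarrow> (nat \<Rightarrow> real) \<Rightarrow> nat \<Rightarrow> nat \<Rightarrow> real \<Rightarrow>
    (nat \<Rightarrow> nat \<Rightarrow> bool) \<Rightarrow> bool" where
  "in_G C c eps k n p E \<longleftrightarrow>
     ln (real n) / real n powr ((real k - 1) / real k) \<le> p \<and>
     p \<le> 1 - c * ln (real n) ^ 4 / real n \<and>
     simple_graph n E \<and>
     \<not> bipartite n E \<and>
     diam_le n E k \<and>
     (\<forall>v<n. \<bar>real (degree n E v) - p * n\<bar> \<le> C * sqrt (p * n * ln n)) \<and>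
     \<bar>2 * real (num_edges n E) - p * n^2\<bar> \<le> C * sqrt (p * n^2 * ln n) \<and>
     (\<forall>v<n. \<forall>w<n. v \<noteq> w \<longrightarrow>
        \<bar>real (codegree n E v w) - p^2 * n\<bar> \<le> C * max (sqrt (p^2 * n * ln n)) (ln n)) \<and>
     (\<exists>lam. adj_eigenvalues n E lam \<and>
        (\<exists>\<phi> :: real vec. dim_vec \<phi> = n \<and> adj_mat n E *\<^sub>v \<phi> = lam ! 0 \<cdot>\<^sub>v \<phi> \<and>
           (\<Sum>i<n. (\<phi> $ i)^2) = 1 \<and>
           (\<forall>i<n. \<bar>\<phi> $ i - 1 / sqrt n\<bar> \<le>
               C * ln n powr (3/2) / (sqrt p * n * ln (p * n)))) \<and>
        \<bar>lam ! 0 - p * n\<bar> \<le> eps n * (p * n) \<and>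
        max \<bar>lam ! 1\<bar> \<bar>lam ! (n - 1)\<bar> \<le> C * sqrt (p * n))"

end

theory Submission
  imports Defs
begin

text \<open>
  In a simple graph, \<open>P\<^sub>w[X\<^sub>2 = x] = d(w)\<^sup>-\<^sup>1 \<Sum>\<^sub>z d(z)\<^sup>-\<^sup>1\<close>, the sum running over the
  common neighbours \<open>z\<close> of \<open>w\<close> and \<open>x\<close>. If all degrees are \<open>pn(1 \<plusminus> e)\<close> and there
  are \<open>\<sigma>(1 \<plusminus> e)\<close> common neighbours, with \<open>e \<le> 1/4\<close>, this is \<open>(1 \<plusminus> 6e) \<sigma>/(pn)\<^sup>2\<close>.
  For \<open>x \<noteq> w\<close>, \<open>\<sigma> = p\<^sup>2n\<close> and \<open>e\<close> is the relative codegree error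
  \<open>C \<surd>(log n)/(p\<surd>n)\<close>; for \<open>x = w\<close>, the common neighbours are all neighbours, so
  \<open>\<sigma> = pn\<close> and \<open>e\<close> is the smaller relative degree error \<open>C \<surd>(log n/(pn))\<close>.
  Since \<open>p\<surd>n \<ge> log n\<close>, both errors are at most \<open>C/\<surd>(log n) \<le> 1/4\<close> for large \<open>n\<close>.

  For \<open>\<ell> \<ge> 3\<close> write \<open>P\<^sub>w[X\<^sub>\<ell> = x]\<close> as an average of \<open>P\<^sub>y[X\<^sub>2 = x]\<close> over the
  distribution of \<open>X\<^sub>\<ell>\<^sub>-\<^sub>2\<close>. The terms \<open>y \<noteq> x\<close> are handled by the two-step estimate;
  the term \<open>y = x\<close> has weight and deviation at most \<open>2/(pn)\<close> each, and
  \<open>(2/(pn))\<^sup>2 = O(\<surd>(log n)/(p n\<^sup>3\<^sup>/\<^sup>2))\<close> again because \<open>p\<surd>n \<ge> log n\<close>.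
\<close>

lemma one_plus_div_one_minus_sq_le:
  fixes e :: real
  assumes "0 \<le> e" and "e \<le> 1/4"
  shows "(1 + e) / (1 - e)^2 \<le> 1 + 6*e"
proof -
  have "0 \<le> e * (3 - 11*e + 6*e^2)"
    using assms by (intro mult_nonneg_nonneg) (auto intro: add_nonneg_nonneg)
  then have "1 + e \<le> (1 + 6*e) * (1 - e)^2"
    by (simp add: algebra_simps power2_eq_square)
  then show ?thesis
    using assms by (simp add: divide_le_eq)
qed

lemma one_minus_le_div_one_plus_sq:
  fixes e :: real
  assumes "0 \<le> e"
  shows "1 - 6*e \<le> (1 - e) / (1 + e)^2"
proof -
  have "0 \<le> e * (3 + 11*e + 6*e^2)"
    using assms by simp
  then have "(1 - 6*e) * (1 + e)^2 \<le> 1 - e"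
    by (simp add: algebra_simps power2_eq_square)
  then show ?thesis
    using assms by (simp add: le_divide_eq)
qed

lemma sum_inverse_bounds:
  fixes d :: "'a \<Rightarrow> real"
  assumes "0 < a" and "\<forall>z\<in>S. a \<le> d z \<and> d z \<le> b"
  shows "real (card S) / b \<le> (\<Sum>z\<in>S. 1 / d z)" and "(\<Sum>z\<in>S. 1 / d z) \<le> real (card S) / a"
proof -
  have "(\<Sum>z\<in>S. 1 / b) \<le> (\<Sum>z\<in>S. 1 / d z)"
    using assms by (intro sum_mono divide_left_mono) (auto intro: order.strict_trans2)
  moreover have "(\<Sum>z\<in>S. 1 / d z) \<le> (\<Sum>z\<in>S. 1 / a)"
    using assms by (intro sum_mono divide_left_mono) (auto intro: order.strict_trans2)
  ultimately show "real (card S) / b \<le> (\<Sum>z\<in>S. 1 / d z)" and "(\<Sum>z\<in>S. 1 / d z) \<le> real (card S) / a"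
    by simp_all
qed

lemma inverse_sum_ratio_approx:
  fixes d :: "'a \<Rightarrow> real"
  assumes "0 < q" and "0 \<le> e" and "e \<le> 1/4"
    and d0: "\<bar>d0 - q\<bar> \<le> e * q" and d: "\<forall>z\<in>S. \<bar>d z - q\<bar> \<le> e * q"
    and card: "\<bar>real (card S) - \<sigma>\<bar> \<le> e * \<sigma>"
  shows "\<bar>(\<Sum>z\<in>S. 1 / d z) / d0 - \<sigma> / q^2\<bar> \<le> 6 * e * \<sigma> / q^2"
proof -
  define T where "T = (\<Sum>z\<in>S. 1 / d z)"
  have lo: "0 < (1 - e) * q" using assms by simp
  have "\<forall>z\<in>S. (1 - e) * q \<le> d z \<and> d z \<le> (1 + e) * q"
    using d by (auto simp: abs_le_iff algebra_simps)
  note T_bounds = sum_inverse_bounds[OF lo this, folded T_def]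
  have d0_bounds: "(1 - e) * q \<le> d0" "d0 \<le> (1 + e) * q"
    using d0 by (auto simp: abs_le_iff algebra_simps)
  have card_bounds: "(1 - e) * \<sigma> \<le> real (card S)" "real (card S) \<le> (1 + e) * \<sigma>"
    using card by (auto simp: abs_le_iff algebra_simps)
  have "0 \<le> (1 + e) * \<sigma>"
    using card_bounds(2) of_nat_0_le_iff[of "card S"] by linarith
  then have "0 \<le> \<sigma>"
    using assms(2) by (simp add: zero_le_mult_iff)
  have "T / d0 \<le> real (card S) / ((1 - e) * q) / ((1 - e) * q)"
    using T_bounds(2) d0_bounds lo by (intro frac_le) auto
  also have "\<dots> \<le> (1 + e) * \<sigma> / ((1 - e) * q) / ((1 - e) * q)"
    using card_bounds lo by (intro divide_right_mono) auto
  also have "\<dots> = (1 + e) / (1 - e)^2 * (\<sigma> / q^2)"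
    by (simp add: power2_eq_square)
  also have "\<dots> \<le> (1 + 6 * e) * (\<sigma> / q^2)"
    using one_plus_div_one_minus_sq_le[OF assms(2,3)] \<open>0 \<le> \<sigma>\<close> by (intro mult_right_mono) auto
  finally have upper: "T / d0 \<le> (1 + 6 * e) * (\<sigma> / q^2)" .
  have "(1 - 6 * e) * (\<sigma> / q^2) \<le> (1 - e) / (1 + e)^2 * (\<sigma> / q^2)"
    using one_minus_le_div_one_plus_sq[OF assms(2)] \<open>0 \<le> \<sigma>\<close> by (intro mult_right_mono) auto
  also have "\<dots> = (1 - e) * \<sigma> / ((1 + e) * q) / ((1 + e) * q)"
    by (simp add: power2_eq_square)
  also have "\<dots> \<le> real (card S) / ((1 + e) * q) / ((1 + e) * q)"
    using card_bounds assms by (intro divide_right_mono) auto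
  also have "\<dots> \<le> T / d0"
    using T_bounds(1) d0_bounds lo order_trans[OF _ T_bounds(1)] assms(1,2) by (intro frac_le) auto
  finally have lower: "(1 - 6 * e) * (\<sigma> / q^2) \<le> T / d0" .
  show ?thesis
    using upper lower unfolding T_def by (simp add: abs_le_iff algebra_simps)
qed

lemma abs_sum_weighted_le:
  fixes P f :: "'a \<Rightarrow> real"
  assumes "finite A" and "x \<in> A" and "\<forall>y\<in>A. 0 \<le> P y" and "sum P A = 1"
    and "\<forall>y\<in>A - {x}. \<bar>f y\<bar> \<le> e" and "\<bar>f x\<bar> \<le> M" and "0 \<le> e"
  shows "\<bar>\<Sum>y\<in>A. P y * f y\<bar> \<le> e + P x * M"
proof -
  have "\<bar>\<Sum>y\<in>A. P y * f y\<bar> \<le> (\<Sum>y\<in>A. \<bar>P y * f y\<bar>)"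
    by (rule sum_abs)
  also have "\<dots> \<le> (\<Sum>y\<in>A. P y * e + (if y = x then P x * M else 0))"
  proof (rule sum_mono)
    fix y assume y: "y \<in> A"
    show "\<bar>P y * f y\<bar> \<le> P y * e + (if y = x then P x * M else 0)"
    proof (cases "y = x")
      case True
      have "0 \<le> P x" using assms(2,3) by blast
      then have "P x * \<bar>f x\<bar> \<le> P x * e + P x * M"
        using assms(6,7) mult_left_mono[OF assms(6)] by (simp add: add_increasing)
      then show ?thesis
        using True \<open>0 \<le> P x\<close> by (simp add: abs_mult)
    next
      case False
      then show ?thesis
        using assms(3,5) y mult_left_mono[of "\<bar>f y\<bar>" e "P y"] by (simp add: abs_mult)
    qed
  qed
  also have "\<dots> = e + P x * M"
    using assms(1,2,4) by (simp add: sum.distrib sum_distrib_left[symmetric] mult.commute)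
  finally show ?thesis .
qed

lemma error_scale_bounds:
  fixes n p L C :: real
  assumes "0 < n" and "1 \<le> L" and "L / sqrt n \<le> p" and "p \<le> 1" and "16 * C^2 \<le> L" and "0 \<le> C"
  shows "sqrt (L / (p * n)) \<le> sqrt L / (p * sqrt n)"
    and "C * (sqrt L / (p * sqrt n)) \<le> 1/4"
    and "1 / (p * n)^2 \<le> sqrt L / (p * sqrt n) / n"
proof -
  have sn: "0 < sqrt n" using assms(1) by simp
  have Lp: "L \<le> p * sqrt n" using assms(3) sn by (simp add: divide_le_eq)
  have "0 < L / sqrt n" using assms(2) sn by simp
  then have p: "0 < p" using assms(3) by linarith
  have sL: "1 \<le> sqrt L" and sLL: "sqrt L * sqrt L = L" using assms(2) by auto
  have "sqrt p * sqrt p \<le> sqrt p"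
    using assms(4) p by (intro mult_left_le) auto
  then have "p \<le> sqrt p"
    using p by simp
  then have "sqrt L / (sqrt p * sqrt n) \<le> sqrt L / (p * sqrt n)"
    using p sn sL by (intro divide_left_mono mult_right_mono) auto
  then show "sqrt (L / (p * n)) \<le> sqrt L / (p * sqrt n)"
    by (simp add: real_sqrt_divide real_sqrt_mult)
  have "4 * C \<le> sqrt L"
    using assms(5) by (intro real_le_rsqrt) (simp add: power_mult_distrib)
  moreover have "sqrt L / (p * sqrt n) \<le> sqrt L / L"
    using Lp assms(2) sL by (intro divide_left_mono) auto
  ultimately have "C * (sqrt L / (p * sqrt n)) \<le> sqrt L / 4 * (sqrt L / L)"
    using assms(6) sL p sn by (intro mult_mono) auto
  then show "C * (sqrt L / (p * sqrt n)) \<le> 1/4"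
    using sLL assms(2) by simp
  have one_le: "1 \<le> sqrt L * (p * sqrt n)"
    using sL Lp assms(2) by (metis mult_mono' mult_1 zero_le_one order_trans)
  have "sqrt n * (p * n) \<le> sqrt L * (p * sqrt n) * (sqrt n * (p * n))"
    using mult_right_mono[OF one_le, of "sqrt n * (p * n)"] sn p assms(1) by simp
  then show "1 / (p * n)^2 \<le> sqrt L / (p * sqrt n) / n"
    using sn p assms(1) by (simp add: field_simps power2_eq_square)
qed

lemma powr_three_halves:
  fixes x :: real
  assumes "0 \<le> x"
  shows "x powr (3/2) = x * sqrt x"
proof (cases "x = 0")
  case False
  have "x powr (3/2) = x powr (1 + 1/2)"
    by simp
  also have "\<dots> = x * sqrt x"
    using assms False by (simp only: powr_add powr_one powr_half_sqrt)
  finally show ?thesis .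
qed simp

lemma walk_prob_nonneg: "0 \<le> walk_prob n E w t x"
  by (induction t arbitrary: x) (auto intro!: sum_nonneg)

lemma sum_transition:
  assumes "0 < degree n E y"
  shows "(\<Sum>x<n. if E y x then 1 / real (degree n E y) else 0) = 1"
  using assms by (simp add: sum.If_cases Int_def conj_commute degree_def card_gt_0_iff)

lemma sum_walk_prob:
  assumes "w < n" and "\<forall>v<n. 0 < degree n E v"
  shows "(\<Sum>x<n. walk_prob n E w t x) = 1"
proof (induction t)
  case 0
  then show ?case using assms(1) by simp
next
  case (Suc t)
  have "(\<Sum>x<n. walk_prob n E w (Suc t) x)
      = (\<Sum>y<n. walk_prob n E w t y * (\<Sum>x<n. if E y x then 1 / real (degree n E y) else 0))"
    by (simp add: sum_distrib_left) (rule sum.swap)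
  also have "\<dots> = (\<Sum>y<n. walk_prob n E w t y)"
    using assms(2) by (simp add: sum_transition)
  finally show ?case using Suc.IH by simp
qed

lemma walk_prob_add:
  assumes "x < n"
  shows "walk_prob n E w (s + t) x = (\<Sum>y<n. walk_prob n E w s y * walk_prob n E y t x)"
  using assms
proof (induction t arbitrary: x)
  case 0
  then show ?case by (simp add: of_bool_def[symmetric] sum_mult_of_bool_eq)
next
  case (Suc t)
  have "walk_prob n E w (s + Suc t) x = (\<Sum>z<n. (\<Sum>y<n. walk_prob n E w s y * walk_prob n E y t z)
      * (if E z x then 1 / real (degree n E z) else 0))"
    using Suc.IH by simp
  also have "\<dots> = (\<Sum>y<n. walk_prob n E w s y * walk_prob n E y (Suc t) x)"
    by (simp add: sum_distrib_left sum_distrib_right mult.assoc) (rule sum.swap)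
  finally show ?case .
qed

lemma walk_prob_Suc_le:
  assumes "w < n" and "0 < m" and "\<forall>v<n. m \<le> real (degree n E v)"
  shows "walk_prob n E w (Suc t) x \<le> 1 / m"
proof -
  have step_le: "(if E y x then 1 / real (degree n E y) else 0) \<le> 1 / m" if "y < n" for y
  proof -
    have "m \<le> real (degree n E y)" using assms(3) that by blast
    then show ?thesis using assms(2) by (auto intro!: frac_le)
  qed
  have "walk_prob n E w (Suc t) x \<le> (\<Sum>y<n. walk_prob n E w t y * (1 / m))"
    unfolding walk_prob.simps
    by (intro sum_mono mult_left_mono step_le walk_prob_nonneg) auto
  also have "\<dots> = 1 / m"
  proof -
    have "\<forall>v<n. 0 < degree n E v"
      using assms(2,3) by (meson of_nat_0_less_iff order_less_le_trans)
    then show ?thesis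
      by (simp add: sum_divide_distrib[symmetric] sum_walk_prob[OF assms(1)])
  qed
  finally show ?thesis .
qed

lemma walk_prob_1:
  assumes "w < n"
  shows "walk_prob n E w 1 x = (if E w x then 1 / real (degree n E w) else 0)"
  using assms by (simp add: of_bool_def[symmetric] sum_of_bool_mult_eq)

lemma walk_prob_2:
  assumes "simple_graph n E" and "w < n" and "x < n"
  shows "walk_prob n E w 2 x
    = (\<Sum>z\<in>{u. u < n \<and> E w u \<and> E x u}. 1 / real (degree n E z)) / real (degree n E w)"
proof -
  have sym: "E z x \<longleftrightarrow> E x z" for z
    using assms(1) unfolding simple_graph_def by blast
  have "walk_prob n E w (1 + 1) x = (\<Sum>z<n. walk_prob n E w 1 z * walk_prob n E z 1 x)"
    by (rule walk_prob_add[OF assms(3)])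
  also have "\<dots> = (\<Sum>z<n. if E w z \<and> E x z then 1 / real (degree n E z) / real (degree n E w) else 0)"
    using assms(2) by (intro sum.cong) (auto simp: walk_prob_1 sym simp del: walk_prob.simps One_nat_def)
  also have "\<dots> = (\<Sum>z\<in>{u. u < n \<and> E w u \<and> E x u}. 1 / real (degree n E z)) / real (degree n E w)"
    by (simp add: sum.If_cases Int_def conj_commute sum_divide_distrib)
  finally show ?thesis
    unfolding one_add_one .
qed

lemma codegree_self: "codegree n E w w = degree n E w"
  by (simp add: codegree_def degree_def)

lemma walk_prob_2_approx:
  assumes "simple_graph n E" and "w < n" and "x < n"
    and "0 < q" and "0 \<le> e" and "e \<le> 1/4"
    and "\<forall>v<n. \<bar>real (degree n E v) - q\<bar> \<le> e * q"
    and "\<bar>real (codegree n E w x) - \<sigma>\<bar> \<le> e * \<sigma>"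
  shows "\<bar>walk_prob n E w 2 x - \<sigma> / q^2\<bar> \<le> 6 * e * \<sigma> / q^2"
proof -
  have "card {u. u < n \<and> E w u \<and> E x u} = codegree n E w x"
    by (simp add: codegree_def)
  then show ?thesis
    unfolding walk_prob_2[OF assms(1-3)]
    using assms(2,4-8) by (intro inverse_sum_ratio_approx) auto
qed

lemma walk_prob_uniform_approx:
  assumes "w < n" and "x < n" and "3 \<le> l"
    and "0 < m" and "m \<le> real n" and "\<forall>v<n. m \<le> real (degree n E v)"
    and "\<forall>y<n. y \<noteq> x \<longrightarrow> \<bar>walk_prob n E y 2 x - 1 / n\<bar> \<le> \<epsilon>" and "0 \<le> \<epsilon>"
  shows "\<bar>walk_prob n E w l x - 1 / n\<bar> \<le> \<epsilon> + 1 / m^2"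
proof -
  obtain t where l: "l = Suc t + 2"
    using assms(3) by (intro that[of "l - 3"]) simp
  define P where "P = walk_prob n E w (Suc t)"
  have "\<forall>v<n. 0 < degree n E v"
    using assms(4,6) by (meson of_nat_0_less_iff order_less_le_trans)
  then have P_sum: "sum P {..<n} = 1"
    unfolding P_def by (rule sum_walk_prob[OF assms(1)])
  have P_x: "P x \<le> 1 / m"
    unfolding P_def by (rule walk_prob_Suc_le[OF assms(1,4,6)])
  have "walk_prob n E w l x - 1 / n = (\<Sum>y<n. P y * (walk_prob n E y 2 x - 1 / n))"
    unfolding l walk_prob_add[OF assms(2)] P_def[symmetric]
    by (simp add: right_diff_distrib sum_subtractf sum_divide_distrib[symmetric] P_sum)
  also have "\<bar>\<dots>\<bar> \<le> \<epsilon> + P x * (1 / m)"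
  proof (rule abs_sum_weighted_le)
    have "walk_prob n E x 2 x \<le> 1 / m"
      using walk_prob_Suc_le[OF assms(2,4,6), of 1 x] by (simp only: Suc_1)
    moreover have "1 / real n \<le> 1 / m"
      using assms(4,5) by (simp add: frac_le)
    moreover have "0 \<le> 1 / real n"
      by simp
    ultimately show "\<bar>walk_prob n E x 2 x - 1 / n\<bar> \<le> 1 / m"
      using walk_prob_nonneg[of n E x 2 x] by (simp only: abs_le_iff) linarith
  qed (use assms(2,7,8) walk_prob_nonneg P_sum in \<open>auto simp: P_def simp del: walk_prob.simps\<close>)
  also have "\<dots> \<le> \<epsilon> + 1 / m^2"
    using mult_right_mono[OF P_x, of "1 / m"] assms(4) by (simp add: power2_eq_square)
  finally show ?thesis .
qed

locale G_regime =
  fixes C c :: real and eps :: "nat \<Rightarrow> real" and k n :: nat and p :: real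
    and E :: "nat \<Rightarrow> nat \<Rightarrow> bool"
  assumes in_G: "in_G C c eps k n p E" and c_pos: "0 < c"
    and p_ge: "ln (real n) / sqrt n \<le> p"
    and ln_ge_1: "1 \<le> ln (real n)" and ln_ge_C: "16 * C^2 \<le> ln (real n)"
begin

text \<open>Relative error scales of the codegrees (\<open>\<beta>\<close>) and of the degrees (\<open>\<gamma>\<close>).\<close>

definition \<beta> :: real where "\<beta> = sqrt (ln (real n)) / (p * sqrt n)"

definition \<gamma> :: real where "\<gamma> = sqrt (ln (real n) / (p * n))"

lemma simple_graph: "simple_graph n E"
  using in_G by (simp add: in_G_def)

lemma n_pos: "0 < n"
  using ln_ge_1 by (cases "n = 0") auto

lemma ln_pos: "0 < ln (real n)"
  using ln_ge_1 by linarith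

lemma p_pos: "0 < p"
proof -
  have "0 < ln (real n) / sqrt n"
    using ln_pos n_pos by (intro divide_pos_pos) auto
  then show ?thesis
    using p_ge by linarith
qed

lemma p_le_1: "p \<le> 1"
proof -
  have "p \<le> 1 - c * ln (real n) ^ 4 / real n"
    using in_G by (simp add: in_G_def)
  moreover have "0 < c * ln (real n) ^ 4 / real n"
    using c_pos ln_pos n_pos by (intro divide_pos_pos mult_pos_pos zero_less_power) auto
  ultimately show ?thesis
    by linarith
qed

lemma degree_approx:
  assumes "v < n"
  shows "\<bar>real (degree n E v) - p * n\<bar> \<le> C * \<gamma> * (p * n)"
proof -
  have "\<bar>real (degree n E v) - p * n\<bar> \<le> C * sqrt (p * n * ln n)"
    using in_G assms by (simp add: in_G_def)
  moreover have "sqrt (p * n * ln n) = \<gamma> * (p * n)"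
    using p_pos n_pos by (simp add: \<gamma>_def real_sqrt_divide real_sqrt_mult field_simps)
  ultimately show ?thesis
    by (simp add: mult.assoc)
qed

lemma C_nonneg: "0 \<le> C"
proof -
  have "0 < \<gamma>"
    using ln_pos p_pos n_pos by (simp add: \<gamma>_def)
  then have "0 < \<gamma> * (p * n)"
    using p_pos n_pos by simp
  moreover have "0 \<le> C * \<gamma> * (p * n)"
    using degree_approx[OF n_pos] by (meson abs_ge_zero order_trans)
  ultimately show ?thesis
    by (simp add: zero_le_mult_iff mult.assoc)
qed

lemma error_scales: "0 \<le> C * \<gamma>" "C * \<gamma> \<le> C * \<beta>" "C * \<beta> \<le> 1/4" "1 / (p * n)^2 \<le> \<beta> / n"
proof -
  have "\<gamma> \<le> \<beta>" "C * \<beta> \<le> 1/4" "1 / (p * n)^2 \<le> \<beta> / n"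
    using error_scale_bounds[OF _ ln_ge_1 p_ge p_le_1 ln_ge_C C_nonneg] n_pos
    unfolding \<beta>_def \<gamma>_def by auto
  moreover have "0 \<le> \<gamma>"
    using ln_ge_1 p_pos n_pos unfolding \<gamma>_def by simp
  ultimately show "0 \<le> C * \<gamma>" "C * \<gamma> \<le> C * \<beta>" "C * \<beta> \<le> 1/4" "1 / (p * n)^2 \<le> \<beta> / n"
    using C_nonneg by (auto intro: mult_left_mono)
qed

lemma degree_approx_coarse: "v < n \<Longrightarrow> \<bar>real (degree n E v) - p * n\<bar> \<le> C * \<beta> * (p * n)"
  using degree_approx error_scales(2) p_pos n_pos
  by (meson mult_right_mono of_nat_0_le_iff order_trans zero_le_mult_iff less_imp_le)

lemma degree_ge:
  assumes "v < n"
  shows "p * n / 2 \<le> real (degree n E v)"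
proof -
  have "C * \<gamma> * (p * n) \<le> 1/4 * (p * n)"
    using error_scales(2,3) p_pos by (intro mult_right_mono) auto
  moreover have "0 \<le> p * n"
    using p_pos by simp
  ultimately show ?thesis
    using degree_approx[OF assms] by (simp add: abs_le_iff)
qed

lemma codegree_approx:
  assumes "v < n" and "u < n" and "v \<noteq> u"
  shows "\<bar>real (codegree n E v u) - p^2 * n\<bar> \<le> C * \<beta> * (p^2 * n)"
proof -
  have "\<bar>real (codegree n E v u) - p^2 * n\<bar> \<le> C * max (sqrt (p^2 * n * ln n)) (ln n)"
    using in_G assms by (simp add: in_G_def)
  moreover have "sqrt (p^2 * n * ln n) = \<beta> * (p^2 * n)"
    using p_pos n_pos by (simp add: \<beta>_def real_sqrt_mult field_simps power2_eq_square)
  moreover have "ln (real n) \<le> sqrt (p^2 * n * ln n)"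
  proof -
    have "ln (real n) \<le> p * sqrt n * 1"
      using p_ge n_pos by (simp add: divide_le_eq)
    also have "\<dots> \<le> p * sqrt n * sqrt (ln n)"
      using ln_ge_1 p_pos by (intro mult_left_mono) auto
    also have "\<dots> = sqrt (p^2 * n * ln n)"
      using p_pos by (simp add: real_sqrt_mult)
    finally show ?thesis .
  qed
  ultimately show ?thesis
    by (simp add: mult.assoc)
qed

lemma two_step_approx:
  assumes "y < n" and "x < n" and "y \<noteq> x"
  shows "\<bar>walk_prob n E y 2 x - 1 / n\<bar> \<le> 6 * C * \<beta> / n"
proof -
  have "0 < p * n" using p_pos n_pos by simp
  then have "\<bar>walk_prob n E y 2 x - p^2 * n / (p * n)^2\<bar> \<le> 6 * (C * \<beta>) * (p^2 * n) / (p * n)^2"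
    using assms degree_approx_coarse codegree_approx error_scales
    by (intro walk_prob_2_approx[OF simple_graph]) (auto simp: mult.assoc)
  moreover have "p^2 * n / (p * n)^2 = 1 / n" and "6 * (C * \<beta>) * (p^2 * n) / (p * n)^2 = 6 * C * \<beta> / n"
    using p_pos n_pos by (simp_all add: power2_eq_square)
  ultimately show ?thesis by simp
qed

lemma return_approx:
  assumes "w < n"
  shows "\<bar>walk_prob n E w 2 w - 1 / (p * n)\<bar> \<le> 6 * C * \<gamma> / (p * n)"
proof -
  have q: "0 < p * n" using p_pos n_pos by simp
  then have "\<bar>walk_prob n E w 2 w - p * n / (p * n)^2\<bar> \<le> 6 * (C * \<gamma>) * (p * n) / (p * n)^2"
    using assms degree_approx error_scales
    by (intro walk_prob_2_approx[OF simple_graph]) (auto simp: codegree_self mult.assoc)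
  moreover have "p * n / (p * n)^2 = 1 / (p * n)" and "6 * (C * \<gamma>) * (p * n) / (p * n)^2 = 6 * C * \<gamma> / (p * n)"
    using q by (simp_all add: power2_eq_square)
  ultimately show ?thesis by simp
qed

lemma walk_prob_approx:
  assumes "w < n" and "x < n" and "3 \<le> l"
  shows "\<bar>walk_prob n E w l x - 1 / n\<bar> \<le> (6 * C + 4) * \<beta> / n"
proof -
  have "\<bar>walk_prob n E w l x - 1 / n\<bar> \<le> 6 * C * \<beta> / n + 1 / (p * n / 2)^2"
    using assms two_step_approx degree_ge error_scales p_pos p_le_1 n_pos
    by (intro walk_prob_uniform_approx) (auto simp: mult_left_le_one_le)
  also have "\<dots> \<le> 6 * C * \<beta> / n + 4 * (\<beta> / n)"
    using error_scales(4) by (simp add: power2_eq_square)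
  also have "\<dots> = (6 * C + 4) * \<beta> / n"
    by (simp add: add_divide_distrib algebra_simps)
  finally show ?thesis .
qed

lemma walk_prob_bounds:
  assumes w: "w < n" and x: "x < n" and l: "3 \<le> l" and D: "6 * C + 4 \<le> D"
  shows "(x \<noteq> w \<longrightarrow> \<bar>walk_prob n E w 2 x - 1 / n\<bar> \<le> D * sqrt (ln n) / (p * n powr (3/2))) \<and>
       (x = w \<longrightarrow> \<bar>walk_prob n E w 2 x - 1 / (p * n)\<bar>
                      \<le> D * sqrt (ln n) / (p powr (3/2) * n powr (3/2))) \<and>
       \<bar>walk_prob n E w l x - 1 / n\<bar> \<le> D * sqrt (ln n) / (p * n powr (3/2))"
proof -
  have \<beta>: "\<beta> / n = sqrt (ln n) / (p * n powr (3/2))" and "0 \<le> \<beta> / n"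
    using n_pos p_pos ln_ge_1 by (simp_all add: \<beta>_def powr_three_halves field_simps)
  have \<gamma>: "\<gamma> / (p * n) = sqrt (ln n) / (p powr (3/2) * n powr (3/2))" and "0 \<le> \<gamma> / (p * n)"
    using n_pos p_pos ln_ge_1
    by (simp_all add: \<gamma>_def powr_three_halves real_sqrt_divide real_sqrt_mult field_simps)
  have "6 * C \<le> D" and "6 * C + 4 \<le> D"
    using C_nonneg D by auto
  then have "6 * C * \<beta> / n \<le> D * (\<beta> / n)" and "(6 * C + 4) * \<beta> / n \<le> D * (\<beta> / n)"
    and "6 * C * \<gamma> / (p * n) \<le> D * (\<gamma> / (p * n))"
    using mult_right_mono[OF _ \<open>0 \<le> \<beta> / n\<close>] mult_right_mono[OF _ \<open>0 \<le> \<gamma> / (p * n)\<close>]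
    by (simp_all only: times_divide_eq_right)
  then show ?thesis
    using two_step_approx[OF w x] return_approx[OF w] walk_prob_approx[OF w x l] \<beta> \<gamma> by auto
qed

end

theorem lemma6p4:
  fixes k l :: nat and C c :: real and eps :: "nat \<Rightarrow> real"
  assumes "k \<ge> 2" and "l \<ge> 3" and "c > 0" and "eps \<longlonglongrightarrow> 0"
  shows "\<exists>D N. \<forall>n \<ge> N. \<forall>p E. \<forall>w<n. \<forall>x<n.
     ln (real n) / sqrt (real n) \<le> p \<longrightarrow> in_G C c eps k n p E \<longrightarrow>
       (x \<noteq> w \<longrightarrow> \<bar>walk_prob n E w 2 x - 1 / n\<bar> \<le> D * sqrt (ln n) / (p * n powr (3/2))) \<and>
       (x = w \<longrightarrow> \<bar>walk_prob n E w 2 x - 1 / (p * n)\<bar>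
                      \<le> D * sqrt (ln n) / (p powr (3/2) * n powr (3/2))) \<and>
       \<bar>walk_prob n E w l x - 1 / n\<bar> \<le> D * sqrt (ln n) / (p * n powr (3/2))"
proof -
  define N where "N = nat \<lceil>exp (max 1 (16 * C^2))\<rceil>"
  have L: "1 \<le> ln (real n)" "16 * C^2 \<le> ln (real n)" if "N \<le> n" for n
  proof -
    have "exp (max 1 (16 * C^2)) \<le> real n"
      using that unfolding N_def by linarith
    moreover have "0 < real n"
      using calculation by (meson exp_gt_zero order.strict_trans2)
    ultimately have "max 1 (16 * C^2) \<le> ln (real n)"
      by (simp only: ln_ge_iff)
    then show "1 \<le> ln (real n)" "16 * C^2 \<le> ln (real n)"
      by simp_all
  qed
  show ?thesis
    by (intro exI[of _ "6 * \<bar>C\<bar> + 4"] exI[of _ N] allI impI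
        G_regime.walk_prob_bounds[OF G_regime.intro[OF _ assms(3)]])
       (auto intro: L assms(2))
qed

end
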